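(* Let $\mathcal{H}$ be a complex Hilbert space, let $T\in\mathcal{B}(\mathcal{H})$ be a normaloid operator, and let $q\in\mathbb{C}$ with $|q|\le 1$. Then \[ |q|\, w(T)\le w_q(T)\le w(T). \]
   Context: $\mathcal{B}(\mathcal{H})$ denotes the bounded linear operators on $\mathcal{H}$ with the operator norm $\|\cdot\|$. The numerical radius is $w(T)=\sup\{|\langle Tx,x\rangle|:\|x\|=1\}$. For $|q|\le 1$, the $q$-numerical range is $W_q(T)=\{\langle Tx,y\rangle: x,y\in\mathcal{H},\ \|x\|=\|y\|=1,\ \langle x,y\rangle=q\}$ and the $q$-numerical radius is $w_q(T)=\sup\{|z|: z\in W_q(T)\}$. An operator $T$ is normaloid if $w(T)=\|T\|$. *)

theory Defs
  imports "HOL-Analysis.Analysis"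
begin

text \<open>Complex inner product spaces (inner product linear in the first argument,
conjugate-linear in the second), and complex Hilbert spaces.\<close>

class complex_inner = real_normed_vector +
  fixes scaleC :: "complex \<Rightarrow> 'a \<Rightarrow> 'a"
    and cinner :: "'a \<Rightarrow> 'a \<Rightarrow> complex"
  assumes scaleC_of_real: "scaleC (complex_of_real r) x = scaleR r x"
    and scaleC_add_right: "scaleC a (x + y) = scaleC a x + scaleC a y"
    and scaleC_add_left: "scaleC (a + b) x = scaleC a x + scaleC b x"
    and scaleC_scaleC: "scaleC a (scaleC b x) = scaleC (a * b) x"
    and scaleC_one: "scaleC 1 x = x"
    and cinner_add_left: "cinner (x + y) z = cinner x z + cinner y z"
    and cinner_scaleC_left: "cinner (scaleC c x) y = c * cinner x y"
    and cinner_commute: "cinner x y = cnj (cinner y x)"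
    and cinner_self_nonneg: "0 \<le> Re (cinner x x)"
    and cinner_self_eq_zero: "cinner x x = 0 \<longleftrightarrow> x = 0"
    and norm_eq_sqrt_cinner: "norm x = sqrt (Re (cinner x x))"

class chilbert_space = complex_inner + complete_space

definition bounded_clinear_op :: "('a::complex_inner \<Rightarrow> 'a) \<Rightarrow> bool" where
  "bounded_clinear_op T \<longleftrightarrow> bounded_linear T \<and> (\<forall>c x. T (scaleC c x) = scaleC c (T x))"

definition numrad :: "('a::complex_inner \<Rightarrow> 'a) \<Rightarrow> real" where
  "numrad T = Sup {cmod (cinner (T x) x) | x. norm x = 1}"

definition qnumrange :: "complex \<Rightarrow> ('a::complex_inner \<Rightarrow> 'a) \<Rightarrow> complex set" where
  "qnumrange q T = {cinner (T x) y | x y. norm x = 1 \<and> norm y = 1 \<and> cinner x y = q}"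

definition qnumrad :: "complex \<Rightarrow> ('a::complex_inner \<Rightarrow> 'a) \<Rightarrow> real" where
  "qnumrad q T = Sup (cmod ` qnumrange q T)"

definition normaloid :: "('a::complex_inner \<Rightarrow> 'a) \<Rightarrow> bool" where
  "normaloid T \<longleftrightarrow> numrad T = onorm T"

end

theory Submission
  imports Defs
begin

text \<open>Upper bound: by Cauchy-Schwarz every element of \<open>W\<^sub>q(T)\<close> has modulus at most
\<open>\<parallel>T\<parallel>\<close>, which equals \<open>w(T)\<close> for normaloid \<open>T\<close>.
Lower bound: for a unit vector \<open>x\<close> choose a unit vector \<open>z \<bottom> x\<close> and put
\<open>t = \<surd>(1 - \<bar>q\<bar>\<^sup>2)\<close>. The unit vectors \<open>y\<^sub>\<pm> = q\<^sup>* x \<pm> t z\<close> satisfy \<open>\<langle>x, y\<^sub>\<pm>\<rangle> = q\<close>, so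
\<open>\<langle>Tx, y\<^sub>\<pm>\<rangle> = q\<langle>Tx, x\<rangle> \<pm> t\<langle>Tx, z\<rangle>\<close> lie in \<open>W\<^sub>q(T)\<close>; as they sum to \<open>2q\<langle>Tx, x\<rangle>\<close>, one of
them has modulus at least \<open>\<bar>q\<bar> \<bar>\<langle>Tx, x\<rangle>\<bar>\<close>.\<close>

lemma cinner_add_right: "cinner x (y + z) = cinner x y + cinner x z"
  by (metis cinner_commute cinner_add_left complex_cnj_add)

lemma cinner_scaleC_right: "cinner x (scaleC c y) = cnj c * cinner x y"
  by (metis cinner_commute cinner_scaleC_left complex_cnj_mult complex_cnj_cnj)

lemma cinner_zero_left: "cinner 0 y = 0"
  using cinner_add_left[of 0 0 y] by simp

lemma cinner_minus_left: "cinner (- x) y = - cinner x (y::'a::complex_inner)"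
  using cinner_scaleC_left[of "-1" x y] scaleC_of_real[of "-1" x] by simp

lemma cinner_diff_left: "cinner (x - y) z = cinner x z - cinner y (z::'a::complex_inner)"
  using cinner_add_left[of x "-y" z] cinner_minus_left[of y z] by simp

lemma cinner_diff_right: "cinner x (y - z) = cinner x y - cinner x (z::'a::complex_inner)"
  by (metis cinner_commute cinner_diff_left complex_cnj_diff)

lemma cinner_self: "cinner x x = complex_of_real ((norm x)\<^sup>2)"
proof (rule complex_eqI)
  show "Im (cinner x x) = Im (complex_of_real ((norm x)\<^sup>2))"
    using cinner_commute[of x x] by (metis Im_complex_of_real cnj.sel(2) neg_equal_zero)
  show "Re (cinner x x) = Re (complex_of_real ((norm x)\<^sup>2))"
    using norm_eq_sqrt_cinner[of x] cinner_self_nonneg[of x] by simp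
qed

lemma norm_scaleC: "norm (scaleC c x) = cmod c * norm (x::'a::complex_inner)"
proof -
  have "cinner (scaleC c x) (scaleC c x) = c * cnj c * cinner x x"
    by (simp add: cinner_scaleC_left cinner_scaleC_right)
  also have "\<dots> = complex_of_real ((cmod c * norm x)\<^sup>2)"
    by (simp add: cinner_self complex_norm_square[symmetric] power_mult_distrib)
  finally show ?thesis
    using norm_eq_sqrt_cinner[of "scaleC c x"] by simp
qed

lemma norm_cinner_le: "cmod (cinner x y) \<le> norm x * norm (y::'a::complex_inner)"
proof (cases "y = 0")
  case True
  then show ?thesis
    by (metis cinner_commute cinner_zero_left complex_cnj_zero norm_zero order_refl
        mult_zero_right)
next
  case False
  define n where "n = (norm y)\<^sup>2"
  define c where "c = cinner x y"
  have n: "n > 0"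
    using False n_def by simp
  have yy: "cinner y y = n" and yx: "cinner y x = cnj c"
    using cinner_self[of y] cinner_commute[of y x] by (simp_all add: n_def c_def)
  have "cinner (x - scaleC (c / n) y) (x - scaleC (c / n) y)
      = cinner x x - cnj (c / n) * c - (c / n) * cnj c + (c / n) * cnj (c / n) * n"
    by (simp add: cinner_diff_left cinner_diff_right cinner_scaleC_left cinner_scaleC_right
        yy yx c_def algebra_simps)
  also have "\<dots> = cinner x x - c * cnj c / n"
    using n by (simp add: field_simps)
  also have "\<dots> = complex_of_real ((norm x)\<^sup>2 - (cmod c)\<^sup>2 / n)"
    by (simp add: cinner_self complex_norm_square[symmetric])
  finally have "0 \<le> (norm x)\<^sup>2 - (cmod c)\<^sup>2 / n"
    by (metis Re_complex_of_real cinner_self_nonneg)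
  then have "(cmod c)\<^sup>2 \<le> (norm x * norm y)\<^sup>2"
    using n by (simp add: n_def field_simps power_mult_distrib)
  then show ?thesis
    unfolding c_def by (rule power2_le_imp_le) simp
qed

lemma unit_orthogonal_exists:
  fixes u v x :: "'a::complex_inner"
  assumes u: "norm u = 1" and v: "norm v = 1" and uv: "cinner u v = 0"
  shows "\<exists>z. norm z = 1 \<and> cinner x z = 0"
proof -
  \<comment> \<open>\<open>w \<bottom> x\<close>, and \<open>w = 0\<close> forces \<open>\<langle>u, x\<rangle> = \<langle>v, x\<rangle> = 0\<close> since \<open>u, v\<close> are orthonormal\<close>
  define w where "w = scaleC (cinner v x) u - scaleC (cinner u x) v"
  have wx: "cinner w x = 0"
    by (simp add: w_def cinner_diff_left cinner_scaleC_left)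
  show ?thesis
  proof (cases "w = 0")
    case True
    have "cinner w v = - cinner u x"
      using u v uv by (simp add: w_def cinner_diff_left cinner_scaleC_left cinner_self)
    then have "cinner x u = 0"
      using True cinner_commute[of x u] by (simp add: cinner_zero_left)
    then show ?thesis
      using u by blast
  next
    case False
    let ?z = "scaleC (complex_of_real (1 / norm w)) w"
    have "norm ?z = 1"
      using False by (simp add: norm_scaleC norm_divide del: of_real_divide)
    moreover have "cinner x ?z = 0"
      using cinner_commute[of x ?z] wx by (simp add: cinner_scaleC_left)
    ultimately show ?thesis
      by blast
  qed
qed

lemma qnumrange_combination_mem:
  fixes x z :: "'a::complex_inner"
  assumes x: "norm x = 1" and z: "norm z = 1" and xz: "cinner x z = 0"
    and t: "t\<^sup>2 + (cmod q)\<^sup>2 = 1"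
  shows "q * cinner (T x) x + t * cinner (T x) z \<in> qnumrange q T"
proof -
  define y where "y = scaleC (cnj q) x + scaleC (complex_of_real t) z"
  have xx: "cinner x x = 1" and zz: "cinner z z = 1"
    using x z by (simp_all add: cinner_self)
  have zx: "cinner z x = 0"
    using cinner_commute[of z x] xz by simp
  have "cinner y y = cnj q * q + complex_of_real t * complex_of_real t"
    by (simp add: y_def cinner_add_left cinner_add_right cinner_scaleC_left cinner_scaleC_right
        xx zz xz zx)
  also have "\<dots> = complex_of_real ((cmod q)\<^sup>2 + t\<^sup>2)"
    by (simp add: complex_norm_square[symmetric] mult.commute power2_eq_square)
  finally have "cinner y y = complex_of_real ((cmod q)\<^sup>2 + t\<^sup>2)" .
  then have y: "norm y = 1"
    using t norm_eq_sqrt_cinner[of y] by (simp add: add.commute)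
  have xy: "cinner x y = q"
    by (simp add: y_def cinner_add_right cinner_scaleC_right xx xz)
  have "q * cinner (T x) x + t * cinner (T x) z = cinner (T x) y"
    by (simp add: y_def cinner_add_right cinner_scaleC_right)
  then show ?thesis
    unfolding qnumrange_def using x y xy by blast
qed

lemma norm_le_max_norm_add_diff:
  fixes a b :: "'a::real_normed_vector"
  shows "norm a \<le> max (norm (a + b)) (norm (a - b))"
proof -
  have "(a + b) + (a - b) = 2 *\<^sub>R a"
    by (simp add: scaleR_2)
  then have "2 * norm a = norm ((a + b) + (a - b))"
    by simp
  also have "\<dots> \<le> norm (a + b) + norm (a - b)"
    by (rule norm_triangle_ineq)
  finally show ?thesis
    by simp
qed

lemma cmod_qnumrange_le_onorm:
  assumes "bounded_linear T" and "w \<in> qnumrange q T"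
  shows "cmod w \<le> onorm T"
proof -
  obtain x y where x: "norm x = 1" and y: "norm y = 1" and w: "w = cinner (T x) y"
    using assms(2) unfolding qnumrange_def by blast
  have "cmod w \<le> norm (T x)"
    using norm_cinner_le[of "T x" y] w y by simp
  also have "\<dots> \<le> onorm T"
    using onorm[OF assms(1), of x] x by simp
  finally show ?thesis .
qed

lemma qnumrad_le_onorm:
  assumes "bounded_linear T" and "qnumrange q T \<noteq> {}"
  shows "qnumrad q T \<le> onorm T"
  unfolding qnumrad_def
  using assms by (intro cSup_least) (auto intro: cmod_qnumrange_le_onorm)

lemma mult_cSup_le:
  fixes S :: "real set"
  assumes "S \<noteq> {}" and "0 \<le> c" and "\<And>s. s \<in> S \<Longrightarrow> c * s \<le> M"
  shows "c * Sup S \<le> M"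
proof (cases "c = 0")
  case True
  then show ?thesis
    using assms by force
next
  case False
  have "Sup S \<le> M / c"
    using assms False by (intro cSup_least) (auto simp: field_simps)
  then show ?thesis
    using assms(2) False by (simp add: field_simps mult.commute)
qed

lemma cmod_mult_numrad_le_qnumrad:
  fixes T :: "'a::complex_inner \<Rightarrow> 'a" and u v :: 'a
  assumes T: "bounded_linear T" and q: "cmod q \<le> 1"
    and u: "norm u = 1" and v: "norm v = 1" and uv: "cinner u v = 0"
  shows "cmod q * numrad T \<le> qnumrad q T"
  unfolding numrad_def
proof (rule mult_cSup_le)
  show "{cmod (cinner (T x) x) | x. norm x = 1} \<noteq> {}"
    using u by blast
  fix s
  assume "s \<in> {cmod (cinner (T x) x) | x. norm x = 1}"
  then obtain x where x: "norm x = 1" and s: "s = cmod (cinner (T x) x)"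
    by blast
  obtain z where z: "norm z = 1" and xz: "cinner x z = 0"
    using unit_orthogonal_exists[OF u v uv] by blast
  define t where "t = sqrt (1 - (cmod q)\<^sup>2)"
  have t: "t\<^sup>2 + (cmod q)\<^sup>2 = 1" and t': "(- t)\<^sup>2 + (cmod q)\<^sup>2 = 1"
    using q by (simp_all add: t_def power_le_one)
  let ?a = "q * cinner (T x) x" and ?b = "t * cinner (T x) z"
  have "?a + ?b \<in> qnumrange q T" and "?a - ?b \<in> qnumrange q T"
    using qnumrange_combination_mem[OF x z xz t, of T]
      qnumrange_combination_mem[OF x z xz t', of T] by simp_all
  moreover have "bdd_above (cmod ` qnumrange q T)"
    by (rule bdd_aboveI2[where M = "onorm T"]) (rule cmod_qnumrange_le_onorm[OF T])
  ultimately have max_le: "max (cmod (?a + ?b)) (cmod (?a - ?b)) \<le> qnumrad q T"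
    unfolding qnumrad_def by (simp add: cSup_upper)
  have "cmod q * s = cmod ?a"
    using s by (simp add: norm_mult)
  also have "\<dots> \<le> max (cmod (?a + ?b)) (cmod (?a - ?b))"
    by (rule norm_le_max_norm_add_diff)
  finally show "cmod q * s \<le> qnumrad q T"
    using max_le by linarith
qed simp

theorem theorem2p7:
  fixes T :: "'a::chilbert_space \<Rightarrow> 'a" and q :: complex
  assumes dim2: "\<exists>u v::'a. norm u = 1 \<and> norm v = 1 \<and> cinner u v = 0"
    and T: "bounded_clinear_op T"
    and nl: "normaloid T"
    and q: "cmod q \<le> 1"
  shows "cmod q * numrad T \<le> qnumrad q T \<and> qnumrad q T \<le> numrad T"
proof -
  obtain u v :: 'a where u: "norm u = 1" and v: "norm v = 1" and uv: "cinner u v = 0"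
    using dim2 by blast
  have bl: "bounded_linear T"
    using T unfolding bounded_clinear_op_def by simp
  obtain z where "norm z = 1" and "cinner u z = 0"
    using unit_orthogonal_exists[OF u v uv] by blast
  moreover have "(sqrt (1 - (cmod q)\<^sup>2))\<^sup>2 + (cmod q)\<^sup>2 = 1"
    using q by (simp add: power_le_one)
  ultimately have "qnumrange q T \<noteq> {}"
    using qnumrange_combination_mem[OF u] by blast
  then have "qnumrad q T \<le> numrad T"
    using qnumrad_le_onorm[OF bl] nl unfolding normaloid_def by simp
  then show ?thesis
    using cmod_mult_numrad_le_qnumrad[OF bl q u v uv] by simp
qed

end
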